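(* Let $k\ge 5$ be an integer and let $H$ be a weighted graph with edge weight $\omega:E(H)\to\{3,4,5\}$. If $H$ contains no cycle of odd weight smaller than $2k+1$, then for every $u\in V(H)$ the set $N^{k-3}_\omega[u]$ is weighted bipartite.
   Context: The weight of a subgraph is the sum of the weights of its edges. The weighted distance $d_\omega(x,y)$ is the minimum weight of an $x,y$-path in $H$, and $N^i_\omega[u]=\{x\in V(H): d_\omega(x,u)\le i\}$. A vertex set $S$ is weighted bipartite if the induced subgraph $H[S]$ contains no cycle of odd weight. *)

theory Defs
  imports Main "HOL-Library.Extended_Nat"
begin

definition wgraph :: "'a set \<Rightarrow> ('a \<Rightarrow> 'a \<Rightarrow> bool) \<Rightarrow> ('a \<Rightarrow> 'a \<Rightarrow> nat) \<Rightarrow> bool" where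
  "wgraph V E w \<longleftrightarrow> finite V
     \<and> (\<forall>x y. E x y \<longrightarrow> x \<in> V \<and> y \<in> V)
     \<and> (\<forall>x y. E x y \<longrightarrow> E y x)
     \<and> (\<forall>x. \<not> E x x)
     \<and> (\<forall>x y. E x y \<longrightarrow> w x y = w y x)"

definition walk_weight :: "('a \<Rightarrow> 'a \<Rightarrow> nat) \<Rightarrow> 'a list \<Rightarrow> nat" where
  "walk_weight w xs = sum_list (map (\<lambda>(a, b). w a b) (zip xs (tl xs)))"

definition is_path :: "'a set \<Rightarrow> ('a \<Rightarrow> 'a \<Rightarrow> bool) \<Rightarrow> 'a \<Rightarrow> 'a \<Rightarrow> 'a list \<Rightarrow> bool" where
  "is_path V E x y ps \<longleftrightarrow> ps \<noteq> [] \<and> hd ps = x \<and> last ps = y \<and> distinct ps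
     \<and> set ps \<subseteq> V \<and> (\<forall>i. Suc i < length ps \<longrightarrow> E (ps ! i) (ps ! Suc i))"

definition wdist :: "'a set \<Rightarrow> ('a \<Rightarrow> 'a \<Rightarrow> bool) \<Rightarrow> ('a \<Rightarrow> 'a \<Rightarrow> nat) \<Rightarrow> 'a \<Rightarrow> 'a \<Rightarrow> enat" where
  "wdist V E w x y = Inf {enat (walk_weight w ps) | ps. is_path V E x y ps}"

definition wball :: "'a set \<Rightarrow> ('a \<Rightarrow> 'a \<Rightarrow> bool) \<Rightarrow> ('a \<Rightarrow> 'a \<Rightarrow> nat) \<Rightarrow> nat \<Rightarrow> 'a \<Rightarrow> 'a set" where
  "wball V E w i u = {x \<in> V. wdist V E w x u \<le> enat i}"

definition is_cycle :: "'a set \<Rightarrow> ('a \<Rightarrow> 'a \<Rightarrow> bool) \<Rightarrow> 'a list \<Rightarrow> bool" where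
  "is_cycle V E cs \<longleftrightarrow> length cs \<ge> 3 \<and> distinct cs \<and> set cs \<subseteq> V
     \<and> (\<forall>i. Suc i < length cs \<longrightarrow> E (cs ! i) (cs ! Suc i))
     \<and> E (last cs) (hd cs)"

definition cycle_weight :: "('a \<Rightarrow> 'a \<Rightarrow> nat) \<Rightarrow> 'a list \<Rightarrow> nat" where
  "cycle_weight w cs = walk_weight w (cs @ [hd cs])"

definition weighted_bipartite :: "'a set \<Rightarrow> ('a \<Rightarrow> 'a \<Rightarrow> bool) \<Rightarrow> ('a \<Rightarrow> 'a \<Rightarrow> nat) \<Rightarrow> 'a set \<Rightarrow> bool" where
  "weighted_bipartite V E w S \<longleftrightarrow>
     (\<forall>cs. is_cycle V E cs \<and> set cs \<subseteq> S \<longrightarrow> even (cycle_weight w cs))"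

end

theory Submission
  imports Defs
begin

(* For every vertex x of the ball fix a path from x to u of weight f x \<le> k - 3. Summing
   f a + w a b + f b over the edges of a cycle counts every f x twice, so on an odd cycle inside
   the ball some edge ab has f a + w a b + f b odd. The edge ab together with the two paths to u
   is then an odd closed walk of weight at most 2 (k - 3) + 5 = 2 k - 1, and splitting an odd
   closed walk at a repeated vertex always leaves an odd closed walk of no larger weight, so it
   contains an odd cycle that is too short. *)

lemma walk_weight_simps [simp]:
  "walk_weight w [] = 0"
  "walk_weight w [x] = 0"
  "walk_weight w (x # y # xs) = w x y + walk_weight w (y # xs)"
  by (auto simp: walk_weight_def)

lemma walk_weight_Cons:
  "xs \<noteq> [] \<Longrightarrow> walk_weight w (x # xs) = w x (hd xs) + walk_weight w xs"
  by (cases xs) auto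

lemma walk_weight_append:
  "walk_weight w (xs @ y # ys) = walk_weight w (xs @ [y]) + walk_weight w (y # ys)"
  by (induction xs rule: induct_list012) auto

lemma walk_weight_rev:
  "successively (\<lambda>x y. w x y = w y x) xs \<Longrightarrow> walk_weight w (rev xs) = walk_weight w xs"
proof (induction xs rule: induct_list012)
  case (3 x y xs)
  then show ?case using walk_weight_append[of w "rev xs" y "[x]"] by simp
qed auto

lemma walk_weight_split_at_repeat:
  "walk_weight w (xs @ y # ys @ y # zs) =
     walk_weight w (xs @ y # zs) + walk_weight w (y # ys @ [y])"
  using walk_weight_append[of w xs y "ys @ y # zs"] walk_weight_append[of w "y # ys" y zs]
    walk_weight_append[of w xs y zs]
  by simp

lemma successively_append_Cons:
  "successively P (xs @ y # ys) \<longleftrightarrow> successively P (xs @ [y]) \<and> successively P (y # ys)"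
  by (induction xs rule: induct_list012) auto

lemma successively_split_at_repeat:
  "successively P (xs @ y # ys @ y # zs) \<Longrightarrow>
     successively P (xs @ y # zs) \<and> successively P (y # ys @ [y])"
  using successively_append_Cons[of P xs y "ys @ y # zs"]
    successively_append_Cons[of P "y # ys" y zs]
    successively_append_Cons[of P xs y zs]
  by simp

lemma successively_iff_zip_tl:
  "successively P xs \<longleftrightarrow> (\<forall>(a, b) \<in> set (zip xs (tl xs)). P a b)"
  by (induction xs rule: induct_list012) auto

lemma is_path_successively: "is_path V E x y ps \<Longrightarrow> successively E ps"
  by (simp add: is_path_def successively_conv_nth)

lemma is_cycle_iff:
  "is_cycle V E cs \<longleftrightarrow>
     3 \<le> length cs \<and> distinct cs \<and> set cs \<subseteq> V \<and> successively E (cs @ [hd cs])"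
  unfolding is_cycle_def successively_conv_nth[symmetric]
  by (cases "cs = []") (auto simp: successively_append_iff)

lemma path_if_in_wball:
  assumes "x \<in> wball V E w n u"
  obtains ps where "is_path V E x u ps" "walk_weight w ps \<le> n"
proof -
  have "Inf {enat (walk_weight w ps) | ps. is_path V E x u ps} < enat (Suc n)"
    using assms unfolding wball_def wdist_def by (auto elim: order.strict_trans1)
  then show thesis using that by (auto simp: Inf_less_iff)
qed

lemma is_cycle_if_odd_distinct_closed_walk:
  assumes "wgraph V E w" and "distinct cs" and "set cs \<subseteq> V"
    and "successively E (cs @ [hd cs])" and "odd (cycle_weight w cs)"
  shows "is_cycle V E cs"
proof -
  have "3 \<le> length cs"
  proof (rule ccontr)
    assume "\<not> 3 \<le> length cs"
    then show False
      using assms(1,4,5)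
      by (cases cs rule: remdups_adj.cases) (auto simp: wgraph_def cycle_weight_def Suc_le_eq)
  qed
  then show ?thesis using assms(2-4) by (simp add: is_cycle_iff)
qed

lemma odd_closed_walk_contains_odd_cycle:
  assumes "wgraph V E w"
  shows "zs \<noteq> [] \<Longrightarrow> hd zs = last zs \<Longrightarrow> successively E zs \<Longrightarrow> set zs \<subseteq> V \<Longrightarrow>
    odd (walk_weight w zs) \<Longrightarrow>
    \<exists>cs. is_cycle V E cs \<and> odd (cycle_weight w cs) \<and> cycle_weight w cs \<le> walk_weight w zs"
proof (induction "length zs" arbitrary: zs rule: less_induct)
  case less
  obtain cs l where zs: "zs = cs @ [l]" using less.prems(1) by (metis rev_exhaust)
  have "cs \<noteq> []" using less.prems(5) zs by auto
  then have l: "l = hd cs" using less.prems(2) zs by simp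
  show ?case
  proof (cases "distinct cs")
    case True
    have "cycle_weight w cs = walk_weight w zs" by (simp add: cycle_weight_def zs l)
    then show ?thesis
      using is_cycle_if_odd_distinct_closed_walk[OF assms True] less.prems zs l by auto
  next
    case False
    then obtain xs y ys zs' where cs: "cs = xs @ y # ys @ y # zs'"
      using not_distinct_decomp by fastforce
    define outer where "outer = xs @ y # zs' @ [l]"
    define inner where "inner = y # ys @ [y]"
    have split: "zs = xs @ y # ys @ y # zs' @ [l]" using zs cs by simp
    have weight: "walk_weight w zs = walk_weight w outer + walk_weight w inner"
      unfolding split outer_def inner_def by (rule walk_weight_split_at_repeat)
    obtain part where part: "part \<in> {outer, inner}" "odd (walk_weight w part)"
      using weight less.prems(5) by fastforce
    have "length part < length zs" "part \<noteq> []" "hd part = last part"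
      using part less.prems(2) by (auto simp: split outer_def inner_def hd_append)
    moreover have "successively E part" "set part \<subseteq> V"
      using part less.prems(3,4) successively_split_at_repeat[of E xs y ys "zs' @ [l]"]
      by (auto simp: split outer_def inner_def)
    ultimately obtain cs' where "is_cycle V E cs'" "odd (cycle_weight w cs')"
      "cycle_weight w cs' \<le> walk_weight w part"
      using less.hyps part(2) by blast
    moreover have "walk_weight w part \<le> walk_weight w zs" using part weight by auto
    ultimately show ?thesis by (meson order.trans)
  qed
qed

lemma odd_cycle_from_edge_and_paths:
  assumes wg: "wgraph V E w" and ab: "E a b"
    and pa: "is_path V E a u pa" and pb: "is_path V E b u pb"
    and odd: "odd (walk_weight w pa + w a b + walk_weight w pb)"
  shows "\<exists>cs. is_cycle V E cs \<and> odd (cycle_weight w cs) \<and>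
    cycle_weight w cs \<le> walk_weight w pa + w a b + walk_weight w pb"
proof -
  have sym: "\<forall>x y. E x y \<longrightarrow> E y x" "\<forall>x y. E x y \<longrightarrow> w x y = w y x"
    using wg by (auto simp: wgraph_def)
  obtain pb' where pb': "pb = pb' @ [u]"
    using pb unfolding is_path_def by (metis append_butlast_last_id)
  obtain ra where ra: "rev pa = u # ra"
    using pa unfolding is_path_def by (metis hd_rev list.collapse rev_is_Nil_conv)
  have walk_pa: "successively E pa" and walk_pb: "successively E pb"
    using pa pb by (simp_all add: is_path_successively)
  have walk_rev_pa: "successively E (rev pa)"
    using walk_pa sym(1) by (auto intro: successively_mono)
  have weight_rev_pa: "walk_weight w (rev pa) = walk_weight w pa"
    using walk_pa sym(2) by (auto intro: walk_weight_rev successively_mono)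
  define zs where "zs = a # pb' @ u # ra"
  have "hd (pb' @ u # ra) = b" using pb pb' by (cases pb') (auto simp: is_path_def)
  moreover have "successively E (pb' @ u # ra)"
    using successively_append_Cons[of E pb' u ra] walk_pb walk_rev_pa pb' ra by simp
  ultimately have "successively E zs" using ab by (simp add: zs_def successively_Cons)
  moreover have "walk_weight w zs = walk_weight w pa + w a b + walk_weight w pb"
    using \<open>hd (pb' @ u # ra) = b\<close> walk_weight_append[of w pb' u ra] weight_rev_pa
    by (simp add: zs_def walk_weight_Cons pb' ra)
  moreover have "last zs = hd pa"
    using last_rev[of pa] by (simp add: zs_def ra)
  then have "hd zs = last zs" using pa by (simp add: zs_def is_path_def)
  moreover have "set zs \<subseteq> V"
  proof -
    have "set zs = insert a (set pb \<union> set (rev pa))" by (auto simp: zs_def pb' ra)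
    then show ?thesis using pa pb by (auto simp: is_path_def)
  qed
  ultimately show ?thesis
    using odd_closed_walk_contains_odd_cycle[OF wg, of zs] odd by (simp add: zs_def)
qed

lemma walk_weight_parity_by_potential:
  "(\<forall>(a, b) \<in> set (zip zs (tl zs)). even (f a + w a b + f b)) \<Longrightarrow> zs \<noteq> [] \<Longrightarrow>
     even (walk_weight w zs + f (hd zs) + f (last zs))"
  by (induction zs rule: induct_list012) auto

lemma odd_cycle_has_odd_edge:
  assumes "is_cycle V E cs" and "odd (cycle_weight w cs)"
  obtains a b where "a \<in> set cs" "b \<in> set cs" "E a b" "odd (f a + w a b + f b)"
proof -
  define zs where "zs = cs @ [hd cs]"
  have cs: "cs \<noteq> []" using assms(1) by (auto simp: is_cycle_def)
  have "odd (walk_weight w zs + f (hd zs) + f (last zs))"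
    using assms(2) cs by (simp add: zs_def cycle_weight_def)
  then have "\<not> (\<forall>(a, b) \<in> set (zip zs (tl zs)). even (f a + w a b + f b))"
    using walk_weight_parity_by_potential[of zs f w] by (auto simp: zs_def)
  then obtain a b where ab: "(a, b) \<in> set (zip zs (tl zs))" "odd (f a + w a b + f b)"
    by blast
  have "successively E zs" using assms(1) by (simp add: is_cycle_iff zs_def)
  with ab(1) have "E a b" unfolding successively_iff_zip_tl by blast
  moreover have "a \<in> set zs" "b \<in> set (tl zs)"
    using ab(1) by (auto dest: set_zip_leftD set_zip_rightD)
  moreover have "set (tl zs) \<subseteq> set cs" "set zs = set cs"
    using cs by (auto simp: zs_def list.set_sel(2))
  ultimately show thesis using that ab(2) by blast
qed

theorem lemma4p1:
  fixes V :: "'a set" and E :: "'a \<Rightarrow> 'a \<Rightarrow> bool" and w :: "'a \<Rightarrow> 'a \<Rightarrow> nat" and k :: nat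
  assumes "k \<ge> 5"
    and "wgraph V E w"
    and "\<And>x y. E x y \<Longrightarrow> w x y \<in> {3, 4, 5}"
    and "\<And>cs. is_cycle V E cs \<Longrightarrow> odd (cycle_weight w cs) \<Longrightarrow> cycle_weight w cs \<ge> 2 * k + 1"
    and "u \<in> V"
  shows "weighted_bipartite V E w (wball V E w (k - 3) u)"
  unfolding weighted_bipartite_def
proof (intro allI impI, elim conjE, rule ccontr)
  fix cs
  assume cycle: "is_cycle V E cs" and in_ball: "set cs \<subseteq> wball V E w (k - 3) u"
    and odd: "odd (cycle_weight w cs)"
  have "\<forall>x \<in> wball V E w (k - 3) u. \<exists>ps. is_path V E x u ps \<and> walk_weight w ps \<le> k - 3"
    by (metis path_if_in_wball)
  then obtain P where P: "\<forall>x \<in> wball V E w (k - 3) u.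
      is_path V E x u (P x) \<and> walk_weight w (P x) \<le> k - 3"
    by metis
  obtain a b where ab: "a \<in> set cs" "b \<in> set cs" "E a b"
    and odd_ab: "odd (walk_weight w (P a) + w a b + walk_weight w (P b))"
    using odd_cycle_has_odd_edge[OF cycle odd, of "\<lambda>x. walk_weight w (P x)"] by blast
  have "is_path V E a u (P a)" "is_path V E b u (P b)"
    and "walk_weight w (P a) \<le> k - 3" "walk_weight w (P b) \<le> k - 3"
    using P ab in_ball by auto
  then obtain cs' where "is_cycle V E cs'" "odd (cycle_weight w cs')"
    and "cycle_weight w cs' \<le> walk_weight w (P a) + w a b + walk_weight w (P b)"
    using odd_cycle_from_edge_and_paths[OF assms(2) \<open>E a b\<close>] odd_ab by blast
  moreover have "w a b \<le> 5" using assms(3)[OF \<open>E a b\<close>] by auto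
  ultimately show False
    using assms(1) assms(4)[of cs'] \<open>walk_weight w (P a) \<le> k - 3\<close>
      \<open>walk_weight w (P b) \<le> k - 3\<close>
    by linarith
qed

end
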